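(* Let $(N,\underline X)\in\aleph^{FGM*}$ with $E[N]<\infty$ and $E[X]<\infty$. Then $$E[S]=\sum_{(i_0,i_1)\in\{0,1\}^2}f_{I_0,I_1}(i_0,i_1)\,\mu_{N_{[1+i_0]}}\,\mu_{X_{[1+i_1]}},\qquad f_{I_0,I_1}(i_0,i_1)=\tfrac14\big(1+(-1)^{i_0+i_1}\theta_{01}\big),$$ equivalently $$E[S]=E[N]E[X]+\frac{\theta_{01}}{4}\big(\mu_{N_{[2]}}-\mu_{N_{[1]}}\big)\big(\mu_{X_{[2]}}-\mu_{X_{[1]}}\big).$$
   Context: Collective risk model (CRM): $N$ is a random variable with values in $\mathbb{N}_0$, cdf $F_N$, pmf $\gamma_N(n)=\Pr(N=n)$ and support $A_N=\{n:\gamma_N(n)>0\}$; $\underline X=\{X_j\}_{j\ge1}$ is a sequence of identically distributed strictly positive random variables with common cdf $F_X$ (generic copy $X$). The aggregate claim amount is $S=\sum_{j=1}^\infty X_j\mathbb{1}_{\{N\ge j\}}$. A $d$-variate FGM copula with parameters $\theta_{j_1\dots j_k}$ is $C(u_1,\dots,u_d)=\prod_{m=1}^d u_m\big(1+\sum_{k=2}^d\sum_{j_1<\dots<j_k}\theta_{j_1\dots j_k}\bar u_{j_1}\cdots\bar u_{j_k}\big)$, $\bar u=1-u$, with parameters such that $1+\sum_{k}\sum_{j_1<\dots<j_k}\theta_{j_1\dots j_k}\varepsilon_{j_1}\cdots\varepsilon_{j_k}\ge0$ for all $\varepsilon\in\{-1,1\}^d$. A CRM belongs to $\aleph^{FGM}$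 if for every $k\in\mathbb{N}_1$, $k\le\sup A_N$, $F_{N,X_1,\dots,X_k}(n,x_1,\dots,x_k)=C_k(F_N(n),F_X(x_1),\dots,F_X(x_k))$ for a $(k+1)$-variate FGM copula $C_k$ with coordinates indexed $0,\dots,k$ (index $0$ for $N$). It belongs to $\aleph^{FGM*}$ if in addition $(N,X_1,\dots,X_k)\overset d=(N,X_{\pi(1)},\dots,X_{\pi(k)})$ for all such $k$ and all permutations $\pi$; then $\theta_{0j}=\theta_{01}$, $\theta_{ij}=\theta_{12}$, $\theta_{0ij}=\theta_{012}$ for all $1\le i<j$. For a random variable $Y$, $Y_{[1]}$, $Y_{[2]}$ denote the minimum and maximum of two iid copies of $Y$, and $\mu_{Y_{[j]}}=E[Y_{[j]}]$. *)

theory Defs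
  imports "HOL-Probability.Probability" "HOL-Combinatorics.Permutations"
begin

text \<open>(d+1)-variate FGM copula with coordinates indexed 0..d; the parameter of the
  coordinate subset S (with card S >= 2) is th S.\<close>
definition fgm_copula :: "nat \<Rightarrow> (nat set \<Rightarrow> real) \<Rightarrow> (nat \<Rightarrow> real) \<Rightarrow> real" where
  "fgm_copula d th u =
     (\<Prod>m\<in>{0..d}. u m) *
     (1 + (\<Sum>S\<in>{S. S \<subseteq> {0..d} \<and> 2 \<le> card S}. th S * (\<Prod>j\<in>S. 1 - u j)))"

definition fgm_admissible :: "nat \<Rightarrow> (nat set \<Rightarrow> real) \<Rightarrow> bool" where
  "fgm_admissible d th \<longleftrightarrow>
     (\<forall>\<epsilon> :: nat \<Rightarrow> real. (\<forall>j\<in>{0..d}. \<epsilon> j \<in> {-1, 1}) \<longrightarrow>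
        0 \<le> 1 + (\<Sum>S\<in>{S. S \<subseteq> {0..d} \<and> 2 \<le> card S}. th S * (\<Prod>j\<in>S. \<epsilon> j)))"

definition mu_min :: "real measure \<Rightarrow> real" where
  "mu_min D = integral\<^sup>L (D \<Otimes>\<^sub>M D) (\<lambda>(x, y). min x y)"

definition mu_max :: "real measure \<Rightarrow> real" where
  "mu_max D = integral\<^sup>L (D \<Otimes>\<^sub>M D) (\<lambda>(x, y). max x y)"

end

theory Submission
  imports Defs
begin

text \<open>Since the X_j are nonnegative, E[S] = \<Sum>_n E[X_(n+1); N > n], and exchangeability
  (swapping X_1 and X_(n+1)) turns each summand into E[X_1; N > n]. The survival function of the
  bivariate FGM pair (N, X_1) is P(X_1 > x, N > n) = (1 - F(n)) (1 - G(x)) (1 + \<theta> F(n) G(x)), so by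
  the layer-cake formula E[X_1; N > n] = (1 - F(n)) E[X] + \<theta> F(n) (1 - F(n)) (\<mu>_X[2] - E[X]),
  as 1 - G^2 is the survival function of X[2]. Summing over n in the same way,
  \<Sum>_n (1 - F(n)) = E[N] and \<Sum>_n F(n) (1 - F(n)) = \<mu>_N[2] - E[N]. Finally
  \<mu>_Y[1] + \<mu>_Y[2] = 2 E[Y] because min + max = x + y.\<close>

lemma borel_measurable_antimono:
  fixes g :: "real \<Rightarrow> real"
  assumes "antimono g"
  shows "g \<in> borel_measurable borel"
proof -
  have "(\<lambda>x. - g x) \<in> borel_measurable borel"
    using assms by (intro borel_measurable_mono) (auto simp: mono_def antimono_def)
  then show ?thesis by simp
qed

lemma nn_integral_eq_nn_integral_tail:
  fixes f :: "'a \<Rightarrow> real"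
  assumes "sigma_finite_measure M" and f[measurable]: "f \<in> borel_measurable M"
  shows "(\<integral>\<^sup>+\<omega>. ennreal (f \<omega>) \<partial>M) =
     (\<integral>\<^sup>+x. indicator {0..} x * emeasure M {\<omega>\<in>space M. x < f \<omega>} \<partial>lborel)"
proof -
  interpret pair_sigma_finite M lborel
    by (simp add: pair_sigma_finite_def assms lborel.sigma_finite_measure_axioms)
  have indicator_measurable: "(\<lambda>(\<omega>, x). indicator {0..<f \<omega>} x :: ennreal) \<in> borel_measurable (M \<Otimes>\<^sub>M lborel)"
  proof -
    have "(\<lambda>p. if 0 \<le> snd p \<and> snd p < f (fst p) then 1 else 0 :: ennreal) \<in> borel_measurable (M \<Otimes>\<^sub>M lborel)"
      by measurable
    then show ?thesis
      by (rule measurable_cong[THEN iffD1, rotated]) (auto simp: indicator_def split: prod.splits)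
  qed
  have "(\<integral>\<^sup>+\<omega>. ennreal (f \<omega>) \<partial>M) = (\<integral>\<^sup>+\<omega>. (\<integral>\<^sup>+x. indicator {0..<f \<omega>} x \<partial>lborel) \<partial>M)"
  proof (intro nn_integral_cong)
    fix \<omega> show "ennreal (f \<omega>) = (\<integral>\<^sup>+x. indicator {0..<f \<omega>} x \<partial>lborel)"
      by (cases "0 \<le> f \<omega>") (auto simp: ennreal_neg)
  qed
  also have "\<dots> = (\<integral>\<^sup>+x. (\<integral>\<^sup>+\<omega>. indicator {0..<f \<omega>} x \<partial>M) \<partial>lborel)"
    using Fubini'[OF indicator_measurable] by simp
  also have "\<dots> = (\<integral>\<^sup>+x. indicator {0..} x * emeasure M {\<omega>\<in>space M. x < f \<omega>} \<partial>lborel)"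
  proof (intro nn_integral_cong)
    fix x :: real
    have "(\<integral>\<^sup>+\<omega>. indicator {0..<f \<omega>} x \<partial>M)
        = (\<integral>\<^sup>+\<omega>. indicator {0..} x * indicator {\<omega>\<in>space M. x < f \<omega>} \<omega> \<partial>M)"
      by (intro nn_integral_cong) (auto simp: indicator_def)
    also have "\<dots> = indicator {0..} x * emeasure M {\<omega>\<in>space M. x < f \<omega>}"
      by (rule nn_integral_cmult_indicator) measurable
    finally show "(\<integral>\<^sup>+\<omega>. indicator {0..<f \<omega>} x \<partial>M) = \<dots>" .
  qed
  finally show ?thesis .
qed

lemma
  fixes f :: "'a \<Rightarrow> real"
  assumes "finite_measure M" and f[measurable]: "f \<in> borel_measurable M"
    and nonneg: "\<And>\<omega>. \<omega> \<in> space M \<Longrightarrow> 0 \<le> f \<omega>"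
  shows integrable_iff_integrable_tail:
      "integrable M f \<longleftrightarrow> integrable lborel (\<lambda>x. indicator {0..} x * measure M {\<omega>\<in>space M. x < f \<omega>})"
    and integral_eq_integral_tail:
      "integral\<^sup>L M f = integral\<^sup>L lborel (\<lambda>x. indicator {0..} x * measure M {\<omega>\<in>space M. x < f \<omega>})"
proof -
  interpret finite_measure M by fact
  let ?g = "\<lambda>x. indicator {0..} x * measure M {\<omega>\<in>space M. x < f \<omega>}"
  have [measurable]: "?g \<in> borel_measurable lborel"
  proof -
    have "antimono (\<lambda>x. measure M {\<omega>\<in>space M. x < f \<omega>})"
      by (auto simp: antimono_def intro!: finite_measure_mono)
    then show ?thesis using borel_measurable_antimono by simp
  qed
  have "(\<integral>\<^sup>+\<omega>. ennreal (f \<omega>) \<partial>M) = (\<integral>\<^sup>+x. ennreal (?g x) \<partial>lborel)"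
    unfolding nn_integral_eq_nn_integral_tail[OF sigma_finite_measure f]
    by (intro nn_integral_cong) (auto simp: emeasure_eq_measure ennreal_mult' indicator_def)
  moreover have "(\<integral>\<^sup>+\<omega>. norm (f \<omega>) \<partial>M) = (\<integral>\<^sup>+\<omega>. ennreal (f \<omega>) \<partial>M)"
    using nonneg by (intro nn_integral_cong) simp
  moreover have "(\<integral>\<^sup>+x. norm (?g x) \<partial>lborel) = (\<integral>\<^sup>+x. ennreal (?g x) \<partial>lborel)"
    by (intro nn_integral_cong) simp
  ultimately show "integrable M f \<longleftrightarrow> integrable lborel ?g"
    "integral\<^sup>L M f = integral\<^sup>L lborel ?g"
    using nonneg by (simp_all add: integrable_iff_bounded integral_eq_nn_integral)
qed

lemma nn_integral_nat_eq_suminf_tail: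
  fixes Y :: "'a \<Rightarrow> nat"
  assumes [measurable]: "Y \<in> measurable M (count_space UNIV)"
  shows "(\<integral>\<^sup>+\<omega>. ennreal (real (Y \<omega>)) \<partial>M) = (\<Sum>n. emeasure M {\<omega>\<in>space M. n < Y \<omega>})"
proof -
  have "(\<integral>\<^sup>+\<omega>. ennreal (real (Y \<omega>)) \<partial>M) = (\<integral>\<^sup>+\<omega>. (\<Sum>n. indicator {\<omega>\<in>space M. n < Y \<omega>} \<omega>) \<partial>M)"
  proof (intro nn_integral_cong)
    fix \<omega> assume "\<omega> \<in> space M"
    then have "(\<Sum>n. indicator {\<omega>\<in>space M. n < Y \<omega>} \<omega> :: ennreal) = (\<Sum>n<Y \<omega>. 1)"
      by (subst suminf_finite[of "{..<Y \<omega>}"]) (auto simp: indicator_def)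
    then show "ennreal (real (Y \<omega>)) = (\<Sum>n. indicator {\<omega>\<in>space M. n < Y \<omega>} \<omega>)"
      by (simp add: ennreal_of_nat_eq_real_of_nat)
  qed
  also have "\<dots> = (\<Sum>n. emeasure M {\<omega>\<in>space M. n < Y \<omega>})"
    by (subst nn_integral_suminf) auto
  finally show ?thesis .
qed

lemma sums_tail_nat:
  fixes Y :: "'a \<Rightarrow> nat"
  assumes "finite_measure M" and Y: "Y \<in> measurable M (count_space UNIV)"
    and int: "integrable M (\<lambda>\<omega>. real (Y \<omega>))"
  shows "(\<lambda>n. measure M {\<omega>\<in>space M. n < Y \<omega>}) sums integral\<^sup>L M (\<lambda>\<omega>. real (Y \<omega>))"
proof -
  interpret finite_measure M by fact
  have [measurable]: "Y \<in> measurable M (count_space UNIV)" by (fact Y)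
  have nn: "(\<integral>\<^sup>+\<omega>. ennreal (real (Y \<omega>)) \<partial>M) = (\<Sum>n. ennreal (measure M {\<omega>\<in>space M. n < Y \<omega>}))"
    unfolding nn_integral_nat_eq_suminf_tail[OF Y] by (simp add: emeasure_eq_measure)
  have "(\<integral>\<^sup>+\<omega>. ennreal (real (Y \<omega>)) \<partial>M) \<noteq> \<top>"
    using int by (simp add: nn_integral_eq_integral)
  then have summable: "summable (\<lambda>n. measure M {\<omega>\<in>space M. n < Y \<omega>})"
    by (intro summable_suminf_not_top) (auto simp: nn)
  then have "integral\<^sup>L M (\<lambda>\<omega>. real (Y \<omega>)) = (\<Sum>n. measure M {\<omega>\<in>space M. n < Y \<omega>})"
    by (subst integral_eq_nn_integral) (auto simp: nn suminf_ennreal2 suminf_nonneg)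
  with summable show ?thesis
    by (simp add: summable_sums)
qed

lemma prob_greater_eq_1_minus:
  fixes f :: "'a \<Rightarrow> 'b::linorder"
  assumes "prob_space M" and "{\<omega>\<in>space M. f \<omega> \<le> x} \<in> sets M"
  shows "measure M {\<omega>\<in>space M. x < f \<omega>} = 1 - measure M {\<omega>\<in>space M. f \<omega> \<le> x}"
proof -
  interpret prob_space M by fact
  have "{\<omega>\<in>space M. x < f \<omega>} = space M - {\<omega>\<in>space M. f \<omega> \<le> x}" by auto
  then show ?thesis using assms(2) by (simp add: prob_compl)
qed

lemma measure_pair_Times_self:
  assumes "prob_space M" "A \<in> sets M"
  shows "measure (M \<Otimes>\<^sub>M M) (A \<times> A) = measure M A ^ 2"
proof -
  interpret prob_space M by fact
  have "emeasure (M \<Otimes>\<^sub>M M) (A \<times> A) = emeasure M A * emeasure M A"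
    using assms by (intro emeasure_pair_measure_Times) auto
  then show ?thesis
    by (simp add: measure_def power2_eq_square enn2real_mult)
qed

lemma
  fixes f :: "'a \<Rightarrow> real"
  assumes "prob_space M" and [measurable]: "f \<in> borel_measurable M"
  shows mu_max_distr: "mu_max (distr M borel f) = (\<integral>p. max (f (fst p)) (f (snd p)) \<partial>(M \<Otimes>\<^sub>M M))"
    and mu_min_distr: "mu_min (distr M borel f) = (\<integral>p. min (f (fst p)) (f (snd p)) \<partial>(M \<Otimes>\<^sub>M M))"
proof -
  interpret prob_space M by fact
  have "prob_space (distr M borel f)"
    by (rule prob_space_distr) measurable
  then have "sigma_finite_measure (distr M borel f)"
    by (rule prob_space_imp_sigma_finite)
  then have pair: "distr M borel f \<Otimes>\<^sub>M distr M borel f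
      = distr (M \<Otimes>\<^sub>M M) (borel \<Otimes>\<^sub>M borel) (\<lambda>(x, y). (f x, f y))"
    by (intro pair_measure_distr) measurable
  show "mu_max (distr M borel f) = (\<integral>p. max (f (fst p)) (f (snd p)) \<partial>(M \<Otimes>\<^sub>M M))"
    unfolding mu_max_def pair by (subst integral_distr) (auto simp: case_prod_beta)
  show "mu_min (distr M borel f) = (\<integral>p. min (f (fst p)) (f (snd p)) \<partial>(M \<Otimes>\<^sub>M M))"
    unfolding mu_min_def pair by (subst integral_distr) (auto simp: case_prod_beta)
qed

lemma
  fixes f :: "'a \<Rightarrow> real"
  assumes "prob_space M" and f: "integrable M f"
  shows integrable_pair_fst: "integrable (M \<Otimes>\<^sub>M M) (\<lambda>p. f (fst p))"
    and integrable_pair_snd: "integrable (M \<Otimes>\<^sub>M M) (\<lambda>p. f (snd p))"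
    and integral_pair_fst: "(\<integral>p. f (fst p) \<partial>(M \<Otimes>\<^sub>M M)) = integral\<^sup>L M f"
    and integral_pair_snd: "(\<integral>p. f (snd p) \<partial>(M \<Otimes>\<^sub>M M)) = integral\<^sup>L M f"
proof -
  interpret prob_space M by fact
  interpret pair_sigma_finite M M ..
  have [measurable]: "f \<in> borel_measurable M" using f by simp
  show fst: "integrable (M \<Otimes>\<^sub>M M) (\<lambda>p. f (fst p))"
    using f by (subst integrable_distr_eq[symmetric]) (auto simp: distr_pair_fst)
  show "integrable (M \<Otimes>\<^sub>M M) (\<lambda>p. f (snd p))"
    using integrable_product_swap[OF fst] by (simp add: split_beta')
  show fst_eq: "(\<integral>p. f (fst p) \<partial>(M \<Otimes>\<^sub>M M)) = integral\<^sup>L M f"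
    by (subst integral_distr[symmetric]) (auto simp: distr_pair_fst)
  show "(\<integral>p. f (snd p) \<partial>(M \<Otimes>\<^sub>M M)) = integral\<^sup>L M f"
    using integral_product_swap[of "\<lambda>p. f (fst p)"] fst_eq by (simp add: split_beta')
qed

lemma
  fixes f :: "'a \<Rightarrow> real"
  assumes "prob_space M" and f: "integrable M f"
  shows integrable_pair_max: "integrable (M \<Otimes>\<^sub>M M) (\<lambda>p. max (f (fst p)) (f (snd p)))"
    and integrable_pair_min: "integrable (M \<Otimes>\<^sub>M M) (\<lambda>p. min (f (fst p)) (f (snd p)))"
proof -
  have [measurable]: "f \<in> borel_measurable M" using f by simp
  have bound: "integrable (M \<Otimes>\<^sub>M M) (\<lambda>p. \<bar>f (fst p)\<bar> + \<bar>f (snd p)\<bar>)"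
    using integrable_pair_fst[OF assms(1) integrable_abs[OF f]] integrable_pair_snd[OF assms(1) integrable_abs[OF f]]
    by simp
  show "integrable (M \<Otimes>\<^sub>M M) (\<lambda>p. max (f (fst p)) (f (snd p)))"
    by (rule Bochner_Integration.integrable_bound[OF bound]) auto
  show "integrable (M \<Otimes>\<^sub>M M) (\<lambda>p. min (f (fst p)) (f (snd p)))"
    by (rule Bochner_Integration.integrable_bound[OF bound]) auto
qed

lemma mu_min_add_mu_max:
  fixes f :: "'a \<Rightarrow> real"
  assumes "prob_space M" and f: "integrable M f"
  shows "mu_min (distr M borel f) + mu_max (distr M borel f) = 2 * integral\<^sup>L M f"
proof -
  have [measurable]: "f \<in> borel_measurable M" using f by simp
  have "mu_min (distr M borel f) + mu_max (distr M borel f)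
      = (\<integral>p. min (f (fst p)) (f (snd p)) + max (f (fst p)) (f (snd p)) \<partial>(M \<Otimes>\<^sub>M M))"
    using assms by (simp add: mu_min_distr mu_max_distr integrable_pair_min integrable_pair_max)
  also have "\<dots> = (\<integral>p. f (fst p) + f (snd p) \<partial>(M \<Otimes>\<^sub>M M))"
    by (intro Bochner_Integration.integral_cong) auto
  also have "\<dots> = 2 * integral\<^sup>L M f"
    using assms by (simp add: integrable_pair_fst integrable_pair_snd integral_pair_fst integral_pair_snd)
  finally show ?thesis .
qed

lemma measure_pair_max_greater:
  fixes f :: "'a \<Rightarrow> 'b::linorder"
  assumes "prob_space M" and A: "{\<omega>\<in>space M. f \<omega> \<le> x} \<in> sets M"
  shows "measure (M \<Otimes>\<^sub>M M) {p\<in>space (M \<Otimes>\<^sub>M M). x < max (f (fst p)) (f (snd p))}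
       = 1 - measure M {\<omega>\<in>space M. f \<omega> \<le> x} ^ 2"
proof -
  interpret prob_space M by fact
  interpret MM: prob_space "M \<Otimes>\<^sub>M M" by (intro prob_space_pair) unfold_locales
  let ?A = "{\<omega>\<in>space M. f \<omega> \<le> x}"
  have "{p\<in>space (M \<Otimes>\<^sub>M M). x < max (f (fst p)) (f (snd p))} = space (M \<Otimes>\<^sub>M M) - ?A \<times> ?A"
    by (auto simp: space_pair_measure less_max_iff_disj not_less)
  moreover have "?A \<times> ?A \<in> sets (M \<Otimes>\<^sub>M M)" using A by simp
  ultimately show ?thesis
    using measure_pair_Times_self[OF \<open>prob_space M\<close> A] by (simp add: MM.prob_compl)
qed

lemma
  fixes Y :: "'a \<Rightarrow> real"
  assumes "prob_space M" and Y: "integrable M Y" and nonneg: "\<And>\<omega>. \<omega> \<in> space M \<Longrightarrow> 0 \<le> Y \<omega>"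
  shows integrable_tail_mu_max:
      "integrable lborel (\<lambda>x. indicator {0..} x * (1 - measure M {\<omega>\<in>space M. Y \<omega> \<le> x} ^ 2))"
    and mu_max_eq_integral_tail:
      "mu_max (distr M borel Y)
       = (\<integral>x. indicator {0..} x * (1 - measure M {\<omega>\<in>space M. Y \<omega> \<le> x} ^ 2) \<partial>lborel)"
proof -
  interpret MM: prob_space "M \<Otimes>\<^sub>M M" using assms(1) by (intro prob_space_pair)
  have [measurable]: "Y \<in> borel_measurable M" using Y by simp
  let ?max = "\<lambda>p. max (Y (fst p)) (Y (snd p))"
  have max_nonneg: "0 \<le> ?max p" if "p \<in> space (M \<Otimes>\<^sub>M M)" for p
    using that nonneg by (auto simp: space_pair_measure intro: max.coboundedI1)
  have tail: "measure (M \<Otimes>\<^sub>M M) {p\<in>space (M \<Otimes>\<^sub>M M). x < ?max p}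
      = 1 - measure M {\<omega>\<in>space M. Y \<omega> \<le> x} ^ 2" for x
    by (rule measure_pair_max_greater[OF assms(1)]) measurable
  show "integrable lborel (\<lambda>x. indicator {0..} x * (1 - measure M {\<omega>\<in>space M. Y \<omega> \<le> x} ^ 2))"
    using integrable_pair_max[OF assms(1) Y]
    by (subst (asm) integrable_iff_integrable_tail[OF MM.finite_measure_axioms _ max_nonneg])
      (simp_all add: tail)
  show "mu_max (distr M borel Y)
      = (\<integral>x. indicator {0..} x * (1 - measure M {\<omega>\<in>space M. Y \<omega> \<le> x} ^ 2) \<partial>lborel)"
    unfolding mu_max_distr[OF assms(1) \<open>Y \<in> borel_measurable M\<close>]
    by (subst integral_eq_integral_tail[OF MM.finite_measure_axioms _ max_nonneg]) (simp_all add: tail)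
qed

lemma sums_mu_max_distr_nat:
  fixes N :: "'a \<Rightarrow> nat"
  assumes "prob_space M" and [measurable]: "N \<in> measurable M (count_space UNIV)"
    and N: "integrable M (\<lambda>\<omega>. real (N \<omega>))"
  shows "(\<lambda>n. 1 - measure M {\<omega>\<in>space M. N \<omega> \<le> n} ^ 2) sums mu_max (distr M borel (\<lambda>\<omega>. real (N \<omega>)))"
proof -
  interpret MM: prob_space "M \<Otimes>\<^sub>M M" using assms(1) by (intro prob_space_pair)
  let ?max = "\<lambda>p. max (N (fst p)) (N (snd p))"
  have [measurable]: "?max \<in> measurable (M \<Otimes>\<^sub>M M) (count_space UNIV)" by measurable
  have "(\<lambda>n. measure (M \<Otimes>\<^sub>M M) {p\<in>space (M \<Otimes>\<^sub>M M). n < ?max p}) sums (\<integral>p. real (?max p) \<partial>(M \<Otimes>\<^sub>M M))"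
    using integrable_pair_max[OF assms(1) N]
    by (intro sums_tail_nat MM.finite_measure_axioms) (simp_all add: of_nat_max)
  moreover have "measure (M \<Otimes>\<^sub>M M) {p\<in>space (M \<Otimes>\<^sub>M M). n < ?max p} = 1 - measure M {\<omega>\<in>space M. N \<omega> \<le> n} ^ 2" for n
    by (rule measure_pair_max_greater[OF assms(1)]) measurable
  ultimately show ?thesis
    by (simp add: mu_max_distr[OF assms(1)] of_nat_max)
qed

lemma fgm_copula_bivariate:
  "fgm_copula 1 th u = u 0 * u 1 * (1 + th {0, 1} * ((1 - u 0) * (1 - u 1)))"
proof -
  have "{S. S \<subseteq> {0..1::nat} \<and> 2 \<le> card S} = {{0, 1}}"
  proof (intro set_eqI iffI)
    fix S assume S: "S \<in> {S. S \<subseteq> {0..1::nat} \<and> 2 \<le> card S}"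
    then have "\<not> S \<subset> {0, 1}"
      using psubset_card_mono[of "{0, 1::nat}" S] by auto
    with S show "S \<in> {{0, 1}}" by auto
  qed auto
  then show ?thesis
    by (simp add: fgm_copula_def insert_commute)
qed

lemma prob_compl_Un_fgm:
  assumes "prob_space M" and A: "A \<in> sets M" and B: "B \<in> sets M"
    and fgm: "measure M (A \<inter> B) = measure M A * measure M B * (1 + \<theta> * ((1 - measure M A) * (1 - measure M B)))"
  shows "measure M (space M - (A \<union> B)) = (1 - measure M A) * (1 - measure M B) * (1 + \<theta> * measure M A * measure M B)"
proof -
  interpret prob_space M by fact
  have "measure M (space M - (A \<union> B)) = 1 - (measure M A + measure M B - measure M (A \<inter> B))"
    using A B by (simp add: prob_compl finite_measure_Diff' finite_measure_Union' Int_commute prob_space)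
  then show ?thesis unfolding fgm by (simp add: algebra_simps)
qed

lemma exists_atom_greater:
  fixes N :: "'a \<Rightarrow> nat"
  assumes "prob_space M" and [measurable]: "N \<in> measurable M (count_space UNIV)"
    and pos: "0 < measure M {\<omega>\<in>space M. n < N \<omega>}"
  shows "\<exists>m>n. 0 < measure M {\<omega>\<in>space M. N \<omega> = m}"
proof (rule ccontr)
  interpret prob_space M by fact
  assume "\<not> (\<exists>m>n. 0 < measure M {\<omega>\<in>space M. N \<omega> = m})"
  then have "measure M {\<omega>\<in>space M. N \<omega> = m} = 0" if "n < m" for m
    using that by (metis measure_nonneg not_less order_antisym)
  then have "{\<omega>\<in>space M. N \<omega> = m} \<in> null_sets M" if "n < m" for m
    using that by (simp add: null_sets_def emeasure_eq_measure)
  then have "(\<Union>m\<in>{n<..}. {\<omega>\<in>space M. N \<omega> = m}) \<in> null_sets M"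
    by (intro null_sets_UN') auto
  moreover have "(\<Union>m\<in>{n<..}. {\<omega>\<in>space M. N \<omega> = m}) = {\<omega>\<in>space M. n < N \<omega>}" by auto
  ultimately show False
    using pos by (simp add: emeasure_eq_measure null_sets_def)
qed

text \<open>The copula of (N, X_1) is only prescribed when N \<ge> 1 has positive probability, hence the
  guard on \<open>cdf\<close>; when P(N > n) = 0 both sides vanish.\<close>

lemma measure_joint_tail_fgm:
  fixes N :: "'a \<Rightarrow> nat" and Y :: "'a \<Rightarrow> real"
  assumes "prob_space M" and N_meas[measurable]: "N \<in> measurable M (count_space UNIV)"
    and [measurable]: "Y \<in> borel_measurable M"
    and cdf: "\<And>t y. (\<exists>m. 1 \<le> m \<and> 0 < measure M {\<omega>\<in>space M. N \<omega> = m}) \<Longrightarrow>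
      measure M {\<omega>\<in>space M. real (N \<omega>) \<le> t \<and> Y \<omega> \<le> y}
      = fgm_copula 1 th (\<lambda>m. if m = 0 then measure M {\<omega>\<in>space M. real (N \<omega>) \<le> t}
                              else measure M {\<omega>\<in>space M. Y \<omega> \<le> y})"
  shows "measure M {\<omega>\<in>space M. x < Y \<omega> \<and> n < N \<omega>}
    = (1 - measure M {\<omega>\<in>space M. N \<omega> \<le> n}) * (1 - measure M {\<omega>\<in>space M. Y \<omega> \<le> x}) *
      (1 + th {0, 1} * measure M {\<omega>\<in>space M. N \<omega> \<le> n} * measure M {\<omega>\<in>space M. Y \<omega> \<le> x})"
proof -
  interpret prob_space M by fact
  let ?A = "{\<omega>\<in>space M. N \<omega> \<le> n}" and ?B = "{\<omega>\<in>space M. Y \<omega> \<le> x}"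
  have tail_N: "measure M {\<omega>\<in>space M. n < N \<omega>} = 1 - prob ?A"
    by (intro prob_greater_eq_1_minus prob_space_axioms) measurable
  have joint: "{\<omega>\<in>space M. x < Y \<omega> \<and> n < N \<omega>} = space M - (?A \<union> ?B)" by auto
  show ?thesis
  proof (cases "measure M {\<omega>\<in>space M. n < N \<omega>} = 0")
    case True
    have "prob {\<omega>\<in>space M. x < Y \<omega> \<and> n < N \<omega>} \<le> prob {\<omega>\<in>space M. n < N \<omega>}"
      by (intro finite_measure_mono) auto
    with True tail_N show ?thesis by (simp add: measure_le_0_iff)
  next
    case False
    then have "0 < prob {\<omega>\<in>space M. n < N \<omega>}"
      by (simp add: less_le)
    then obtain m where "n < m" "0 < prob {\<omega>\<in>space M. N \<omega> = m}"
      using exists_atom_greater[OF prob_space_axioms N_meas] by blast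
    then have "\<exists>m. 1 \<le> m \<and> 0 < prob {\<omega>\<in>space M. N \<omega> = m}"
      by (intro exI[of _ m]) simp
    moreover have "{\<omega>\<in>space M. real (N \<omega>) \<le> real n} = ?A"
      and "{\<omega>\<in>space M. real (N \<omega>) \<le> real n \<and> Y \<omega> \<le> x} = ?A \<inter> ?B" by auto
    ultimately have "prob (?A \<inter> ?B) = prob ?A * prob ?B * (1 + th {0, 1} * ((1 - prob ?A) * (1 - prob ?B)))"
      using cdf[of "real n" x, unfolded fgm_copula_bivariate] by simp
    then show ?thesis
      unfolding joint by (intro prob_compl_Un_fgm) (auto simp: prob_space_axioms)
  qed
qed

lemma integral_if_fgm_tail:
  fixes Y :: "'a \<Rightarrow> real" and P :: "'a \<Rightarrow> bool"
  assumes "prob_space M" and Y: "integrable M Y" and nonneg: "\<And>\<omega>. \<omega> \<in> space M \<Longrightarrow> 0 \<le> Y \<omega>"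
    and event: "{\<omega>\<in>space M. P \<omega>} \<in> sets M"
    and tail: "\<And>x. 0 \<le> x \<Longrightarrow> measure M {\<omega>\<in>space M. x < Y \<omega> \<and> P \<omega>}
      = p * (1 - measure M {\<omega>\<in>space M. Y \<omega> \<le> x}) * (1 + c * measure M {\<omega>\<in>space M. Y \<omega> \<le> x})"
  shows "(\<integral>\<omega>. (if P \<omega> then Y \<omega> else 0) \<partial>M)
    = p * integral\<^sup>L M Y + p * c * (mu_max (distr M borel Y) - integral\<^sup>L M Y)"
proof -
  interpret prob_space M by fact
  have [measurable]: "Y \<in> borel_measurable M" using Y by simp
  define G where "G x = measure M {\<omega>\<in>space M. Y \<omega> \<le> x}" for x
  let ?i = "indicator {0..} :: real \<Rightarrow> real"
  have tail_Y: "measure M {\<omega>\<in>space M. x < Y \<omega>} = 1 - G x" for x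
    unfolding G_def by (intro prob_greater_eq_1_minus prob_space_axioms) measurable
  have int1: "integrable lborel (\<lambda>x. ?i x * (1 - G x))"
    and mean_Y: "integral\<^sup>L M Y = (\<integral>x. ?i x * (1 - G x) \<partial>lborel)"
    using integrable_iff_integrable_tail[OF finite_measure_axioms _ nonneg]
      integral_eq_integral_tail[OF finite_measure_axioms _ nonneg] Y
    by (simp_all add: tail_Y)
  have int2: "integrable lborel (\<lambda>x. ?i x * (1 - G x ^ 2))"
    and max_Y: "mu_max (distr M borel Y) = (\<integral>x. ?i x * (1 - G x ^ 2) \<partial>lborel)"
    unfolding G_def using integrable_tail_mu_max mu_max_eq_integral_tail assms by blast+
  have if_nonneg: "0 \<le> (if P \<omega> then Y \<omega> else 0)" if "\<omega> \<in> space M" for \<omega>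
    using nonneg that by simp
  have "(\<integral>\<omega>. (if P \<omega> then Y \<omega> else 0) \<partial>M)
      = (\<integral>x. ?i x * measure M {\<omega>\<in>space M. x < (if P \<omega> then Y \<omega> else 0)} \<partial>lborel)"
    using event by (intro integral_eq_integral_tail[OF finite_measure_axioms _ if_nonneg] measurable_If) auto
  also have "\<dots> = (\<integral>x. p * (?i x * (1 - G x)) + p * c * (?i x * (1 - G x ^ 2) - ?i x * (1 - G x)) \<partial>lborel)"
  proof (intro Bochner_Integration.integral_cong refl)
    fix x :: real
    show "?i x * measure M {\<omega>\<in>space M. x < (if P \<omega> then Y \<omega> else 0)}
        = p * (?i x * (1 - G x)) + p * c * (?i x * (1 - G x ^ 2) - ?i x * (1 - G x))"
    proof (cases "0 \<le> x")
      case True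
      then have "{\<omega>\<in>space M. x < (if P \<omega> then Y \<omega> else 0)} = {\<omega>\<in>space M. x < Y \<omega> \<and> P \<omega>}"
        by auto
      with True tail show ?thesis
        by (simp add: G_def power2_eq_square algebra_simps)
    qed simp
  qed
  also have "\<dots> = p * integral\<^sup>L M Y + p * c * (mu_max (distr M borel Y) - integral\<^sup>L M Y)"
    using int1 int2 by (simp add: mean_Y max_Y)
  finally show ?thesis .
qed

lemma sums_integral_if_fgm:
  fixes N :: "'a \<Rightarrow> nat" and Y :: "'a \<Rightarrow> real"
  assumes "prob_space M" and [measurable]: "N \<in> measurable M (count_space UNIV)"
    and N: "integrable M (\<lambda>\<omega>. real (N \<omega>))"
    and Y: "integrable M Y" and nonneg: "\<And>\<omega>. \<omega> \<in> space M \<Longrightarrow> 0 \<le> Y \<omega>"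
    and tail: "\<And>n x. measure M {\<omega>\<in>space M. x < Y \<omega> \<and> n < N \<omega>}
      = (1 - measure M {\<omega>\<in>space M. N \<omega> \<le> n}) * (1 - measure M {\<omega>\<in>space M. Y \<omega> \<le> x}) *
        (1 + \<theta> * measure M {\<omega>\<in>space M. N \<omega> \<le> n} * measure M {\<omega>\<in>space M. Y \<omega> \<le> x})"
  shows "(\<lambda>n. \<integral>\<omega>. (if n < N \<omega> then Y \<omega> else 0) \<partial>M) sums
    (integral\<^sup>L M (\<lambda>\<omega>. real (N \<omega>)) * integral\<^sup>L M Y
     + \<theta> * (mu_max (distr M borel (\<lambda>\<omega>. real (N \<omega>))) - integral\<^sup>L M (\<lambda>\<omega>. real (N \<omega>)))
         * (mu_max (distr M borel Y) - integral\<^sup>L M Y))"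
proof -
  interpret prob_space M by fact
  define F where "F n = measure M {\<omega>\<in>space M. N \<omega> \<le> n}" for n
  define \<mu>N where "\<mu>N = integral\<^sup>L M (\<lambda>\<omega>. real (N \<omega>))"
  define \<mu>Y where "\<mu>Y = integral\<^sup>L M Y"
  define \<Delta>N where "\<Delta>N = mu_max (distr M borel (\<lambda>\<omega>. real (N \<omega>))) - \<mu>N"
  define \<Delta>Y where "\<Delta>Y = mu_max (distr M borel Y) - \<mu>Y"
  have summand: "(\<integral>\<omega>. (if n < N \<omega> then Y \<omega> else 0) \<partial>M) = (1 - F n) * \<mu>Y + \<theta> * \<Delta>Y * (F n * (1 - F n))" for n
    unfolding \<mu>Y_def \<Delta>Y_def F_def
    by (subst integral_if_fgm_tail[OF assms(1) Y nonneg _ tail]) (simp_all add: algebra_simps)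
  have tail_N: "measure M {\<omega>\<in>space M. n < N \<omega>} = 1 - F n" for n
    unfolding F_def by (intro prob_greater_eq_1_minus prob_space_axioms) measurable
  have sums_N: "(\<lambda>n. 1 - F n) sums \<mu>N"
    using sums_tail_nat[OF finite_measure_axioms _ N] by (simp add: tail_N \<mu>N_def)
  have "(\<lambda>n. (1 - F n ^ 2) - (1 - F n)) sums \<Delta>N"
    unfolding \<Delta>N_def F_def
    by (intro sums_diff sums_mu_max_distr_nat[OF assms(1) _ N] sums_N[unfolded F_def]) simp
  then have sums_F_times_tail_N: "(\<lambda>n. F n * (1 - F n)) sums \<Delta>N"
    by (simp add: power2_eq_square algebra_simps)
  have "(\<lambda>n. (1 - F n) * \<mu>Y + \<theta> * \<Delta>Y * (F n * (1 - F n))) sums (\<mu>N * \<mu>Y + \<theta> * \<Delta>Y * \<Delta>N)"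
    by (intro sums_add sums_mult sums_mult2 sums_N sums_F_times_tail_N)
  then show ?thesis
    unfolding summand by (simp add: \<mu>N_def \<mu>Y_def \<Delta>N_def \<Delta>Y_def algebra_simps)
qed

lemma nn_integral_random_sum:
  fixes N :: "'a \<Rightarrow> nat" and X :: "nat \<Rightarrow> 'a \<Rightarrow> real"
  assumes [measurable]: "N \<in> measurable M (count_space UNIV)"
    and X_meas: "\<And>j. 1 \<le> j \<Longrightarrow> X j \<in> borel_measurable M"
    and nonneg: "\<And>j \<omega>. 1 \<le> j \<Longrightarrow> \<omega> \<in> space M \<Longrightarrow> 0 \<le> X j \<omega>"
  shows "(\<integral>\<^sup>+\<omega>. ennreal (\<Sum>j\<in>{1..N \<omega>}. X j \<omega>) \<partial>M)
    = (\<Sum>n. \<integral>\<^sup>+\<omega>. ennreal (if n < N \<omega> then X (Suc n) \<omega> else 0) \<partial>M)"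
proof -
  have [measurable]: "X (Suc n) \<in> borel_measurable M" for n using X_meas by simp
  have "(\<integral>\<^sup>+\<omega>. ennreal (\<Sum>j\<in>{1..N \<omega>}. X j \<omega>) \<partial>M)
      = (\<integral>\<^sup>+\<omega>. (\<Sum>n. ennreal (if n < N \<omega> then X (Suc n) \<omega> else 0)) \<partial>M)"
  proof (intro nn_integral_cong)
    fix \<omega> assume \<omega>: "\<omega> \<in> space M"
    have "(\<Sum>n. ennreal (if n < N \<omega> then X (Suc n) \<omega> else 0)) = (\<Sum>n<N \<omega>. ennreal (X (Suc n) \<omega>))"
      by (subst suminf_finite[of "{..<N \<omega>}"]) auto
    also have "\<dots> = ennreal (\<Sum>n<N \<omega>. X (Suc n) \<omega>)"
      using nonneg \<omega> by (intro sum_ennreal) simp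
    also have "(\<Sum>n<N \<omega>. X (Suc n) \<omega>) = (\<Sum>j\<in>{1..N \<omega>}. X j \<omega>)"
      by (simp add: sum.atLeast1_atMost_eq)
    finally show "ennreal (\<Sum>j\<in>{1..N \<omega>}. X j \<omega>) = (\<Sum>n. ennreal (if n < N \<omega> then X (Suc n) \<omega> else 0))"
      by simp
  qed
  also have "\<dots> = (\<Sum>n. \<integral>\<^sup>+\<omega>. ennreal (if n < N \<omega> then X (Suc n) \<omega> else 0) \<partial>M)"
    by (rule nn_integral_suminf) measurable
  finally show ?thesis .
qed

lemma nn_integral_if_less_transpose:
  fixes N :: "'a \<Rightarrow> nat" and X :: "nat \<Rightarrow> 'a \<Rightarrow> real"
  assumes [measurable]: "N \<in> measurable M (count_space UNIV)"
    and X_meas: "\<And>j. 1 \<le> j \<Longrightarrow> X j \<in> borel_measurable M"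
    and swap: "distr M (count_space UNIV \<Otimes>\<^sub>M PiM {1..Suc n} (\<lambda>_. borel))
        (\<lambda>\<omega>. (N \<omega>, \<lambda>i\<in>{1..Suc n}. X (Transposition.transpose 1 (Suc n) i) \<omega>))
      = distr M (count_space UNIV \<Otimes>\<^sub>M PiM {1..Suc n} (\<lambda>_. borel))
        (\<lambda>\<omega>. (N \<omega>, \<lambda>i\<in>{1..Suc n}. X i \<omega>))"
  shows "(\<integral>\<^sup>+\<omega>. ennreal (if n < N \<omega> then X (Suc n) \<omega> else 0) \<partial>M)
       = (\<integral>\<^sup>+\<omega>. ennreal (if n < N \<omega> then X 1 \<omega> else 0) \<partial>M)"
proof -
  let ?K = "{1..Suc n}"
  let ?S = "count_space UNIV \<Otimes>\<^sub>M PiM ?K (\<lambda>_. borel) :: (nat \<times> (nat \<Rightarrow> real)) measure"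
  let ?h = "\<lambda>p::nat \<times> (nat \<Rightarrow> real). ennreal (if n < fst p then snd p (Suc n) else 0)"
  have [measurable]: "?h \<in> borel_measurable ?S"
  proof -
    have [measurable]: "(\<lambda>p::nat \<times> (nat \<Rightarrow> real). snd p (Suc n)) \<in> borel_measurable ?S"
      by (rule measurable_compose[OF measurable_snd measurable_component_singleton]) auto
    show ?thesis by measurable
  qed
  have vector_measurable: "(\<lambda>\<omega>. (N \<omega>, \<lambda>i\<in>?K. X (\<rho> i) \<omega>)) \<in> measurable M ?S"
    if "\<And>i. i \<in> ?K \<Longrightarrow> 1 \<le> \<rho> i" for \<rho>
    using that X_meas by (intro measurable_Pair measurable_restrict) auto
  have "(\<integral>\<^sup>+\<omega>. ennreal (if n < N \<omega> then X 1 \<omega> else 0) \<partial>M)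
      = (\<integral>\<^sup>+\<omega>. ?h (N \<omega>, \<lambda>i\<in>?K. X (Transposition.transpose 1 (Suc n) i) \<omega>) \<partial>M)"
    by (intro nn_integral_cong) simp
  also have "\<dots> = (\<integral>\<^sup>+p. ?h p \<partial>distr M ?S (\<lambda>\<omega>. (N \<omega>, \<lambda>i\<in>?K. X (Transposition.transpose 1 (Suc n) i) \<omega>)))"
    by (intro nn_integral_distr[symmetric] vector_measurable) (auto simp: Transposition.transpose_def)
  also have "\<dots> = (\<integral>\<^sup>+p. ?h p \<partial>distr M ?S (\<lambda>\<omega>. (N \<omega>, \<lambda>i\<in>?K. X i \<omega>)))"
    by (simp only: swap)
  also have "\<dots> = (\<integral>\<^sup>+\<omega>. ?h (N \<omega>, \<lambda>i\<in>?K. X i \<omega>) \<partial>M)"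
    using vector_measurable[of id] by (intro nn_integral_distr) auto
  also have "\<dots> = (\<integral>\<^sup>+\<omega>. ennreal (if n < N \<omega> then X (Suc n) \<omega> else 0) \<partial>M)"
    by (intro nn_integral_cong) simp
  finally show ?thesis ..
qed

lemma nn_integral_if_less_exchangeable:
  fixes N :: "'a \<Rightarrow> nat" and X :: "nat \<Rightarrow> 'a \<Rightarrow> real"
  assumes "prob_space M" and N_meas[measurable]: "N \<in> measurable M (count_space UNIV)"
    and X_meas: "\<And>j. 1 \<le> j \<Longrightarrow> X j \<in> borel_measurable M"
    and exch: "\<And>k \<pi>. 1 \<le> k \<Longrightarrow> (\<exists>m. k \<le> m \<and> 0 < measure M {\<omega>\<in>space M. N \<omega> = m}) \<Longrightarrow>
        \<pi> permutes {1..k} \<Longrightarrow>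
        distr M (count_space UNIV \<Otimes>\<^sub>M PiM {1..k} (\<lambda>_. borel)) (\<lambda>\<omega>. (N \<omega>, \<lambda>i\<in>{1..k}. X (\<pi> i) \<omega>))
      = distr M (count_space UNIV \<Otimes>\<^sub>M PiM {1..k} (\<lambda>_. borel)) (\<lambda>\<omega>. (N \<omega>, \<lambda>i\<in>{1..k}. X i \<omega>))"
  shows "(\<integral>\<^sup>+\<omega>. ennreal (if n < N \<omega> then X (Suc n) \<omega> else 0) \<partial>M)
       = (\<integral>\<^sup>+\<omega>. ennreal (if n < N \<omega> then X 1 \<omega> else 0) \<partial>M)"
proof -
  interpret prob_space M by fact
  show ?thesis
  proof (cases "prob {\<omega>\<in>space M. n < N \<omega>} = 0")
    case True
    then have "AE \<omega> in M. \<not> n < N \<omega>"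
      by (intro AE_I'[of "{\<omega>\<in>space M. n < N \<omega>}"]) (auto simp: null_sets_def emeasure_eq_measure)
    then show ?thesis
      by (intro nn_integral_cong_AE) auto
  next
    case False
    then have "0 < prob {\<omega>\<in>space M. n < N \<omega>}"
      by (simp add: less_le)
    then obtain m where "n < m" "0 < prob {\<omega>\<in>space M. N \<omega> = m}"
      using exists_atom_greater[OF prob_space_axioms N_meas] by blast
    then show ?thesis
      using X_meas by (intro nn_integral_if_less_transpose exch permutes_swap_id) (auto intro: Suc_leI)
  qed
qed

lemma integral_random_sum_exchangeable:
  fixes N :: "'a \<Rightarrow> nat" and X :: "nat \<Rightarrow> 'a \<Rightarrow> real"
  assumes "prob_space M" and N_meas[measurable]: "N \<in> measurable M (count_space UNIV)"
    and X_meas: "\<And>j. 1 \<le> j \<Longrightarrow> X j \<in> borel_measurable M"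
    and nonneg: "\<And>j \<omega>. 1 \<le> j \<Longrightarrow> \<omega> \<in> space M \<Longrightarrow> 0 \<le> X j \<omega>"
    and exch: "\<And>k \<pi>. 1 \<le> k \<Longrightarrow> (\<exists>m. k \<le> m \<and> 0 < measure M {\<omega>\<in>space M. N \<omega> = m}) \<Longrightarrow>
        \<pi> permutes {1..k} \<Longrightarrow>
        distr M (count_space UNIV \<Otimes>\<^sub>M PiM {1..k} (\<lambda>_. borel)) (\<lambda>\<omega>. (N \<omega>, \<lambda>i\<in>{1..k}. X (\<pi> i) \<omega>))
      = distr M (count_space UNIV \<Otimes>\<^sub>M PiM {1..k} (\<lambda>_. borel)) (\<lambda>\<omega>. (N \<omega>, \<lambda>i\<in>{1..k}. X i \<omega>))"
    and X1: "integrable M (X 1)"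
    and sums: "(\<lambda>n. \<integral>\<omega>. (if n < N \<omega> then X 1 \<omega> else 0) \<partial>M) sums s"
  shows "(\<integral>\<omega>. (\<Sum>j\<in>{1..N \<omega>}. X j \<omega>) \<partial>M) = s"
proof -
  let ?E = "\<lambda>n. \<integral>\<omega>. (if n < N \<omega> then X 1 \<omega> else 0) \<partial>M"
  have [measurable]: "X 1 \<in> borel_measurable M" using X1 by simp
  have E_nonneg: "0 \<le> ?E n" for n
    using nonneg by (intro Bochner_Integration.integral_nonneg) simp
  have "(\<integral>\<^sup>+\<omega>. ennreal (if n < N \<omega> then X 1 \<omega> else 0) \<partial>M) = ennreal (?E n)" for n
    using nonneg X1 by (intro nn_integral_eq_integral Bochner_Integration.integrable_bound[OF X1] AE_I2) auto
  then have "(\<integral>\<^sup>+\<omega>. ennreal (\<Sum>j\<in>{1..N \<omega>}. X j \<omega>) \<partial>M) = (\<Sum>n. ennreal (?E n))"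
    using nn_integral_random_sum[OF N_meas X_meas nonneg]
      nn_integral_if_less_exchangeable[OF assms(1) N_meas X_meas exch] by simp
  also have "\<dots> = ennreal s"
    using sums E_nonneg by (simp add: suminf_ennreal2 sums_summable sums_unique[symmetric])
  finally have "(\<integral>\<^sup>+\<omega>. ennreal (\<Sum>j\<in>{1..N \<omega>}. X j \<omega>) \<partial>M) = ennreal s" .
  moreover have "0 \<le> s"
    by (rule sums_le[OF _ sums_zero sums]) (simp add: E_nonneg)
  moreover have "(\<lambda>\<omega>. \<Sum>j\<in>{1..N \<omega>}. X j \<omega>) \<in> borel_measurable M"
    using X_meas by (intro measurable_compose_countable[OF _ N_meas, where f="\<lambda>i \<omega>. \<Sum>j\<in>{1..i}. X j \<omega>"]
        borel_measurable_sum) auto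
  ultimately show ?thesis
    using nonneg by (subst (asm) nn_integral_eq_integrable) (auto intro!: sum_nonneg)
qed

theorem mainTheorem8:
  fixes M :: "'a measure" and N :: "'a \<Rightarrow> nat" and X :: "nat \<Rightarrow> 'a \<Rightarrow> real"
    and \<theta> :: "nat \<Rightarrow> nat set \<Rightarrow> real"
  assumes prob: "prob_space M"
    and N_meas: "N \<in> measurable M (count_space UNIV)"
    and X_meas: "\<And>j. j \<ge> 1 \<Longrightarrow> X j \<in> borel_measurable M"
    and X_pos: "\<And>j \<omega>. j \<ge> 1 \<Longrightarrow> \<omega> \<in> space M \<Longrightarrow> X j \<omega> > 0"
    and X_ident: "\<And>j. j \<ge> 1 \<Longrightarrow> distr M borel (X j) = distr M borel (X 1)"
    and FGM: "\<And>k. k \<ge> 1 \<Longrightarrow> (\<exists>n. k \<le> n \<and> measure M {\<omega>\<in>space M. N \<omega> = n} > 0) \<Longrightarrow>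
        fgm_admissible k (\<theta> k) \<and>
        (\<forall>(t::real) (x::nat \<Rightarrow> real).
           measure M {\<omega>\<in>space M. real (N \<omega>) \<le> t \<and> (\<forall>j\<in>{1..k}. X j \<omega> \<le> x j)}
         = fgm_copula k (\<theta> k)
             (\<lambda>m. if m = 0 then measure M {\<omega>\<in>space M. real (N \<omega>) \<le> t}
                  else measure M {\<omega>\<in>space M. X 1 \<omega> \<le> x m}))"
    and exch: "\<And>k \<pi>. k \<ge> 1 \<Longrightarrow> (\<exists>n. k \<le> n \<and> measure M {\<omega>\<in>space M. N \<omega> = n} > 0) \<Longrightarrow>
        \<pi> permutes {1..k} \<Longrightarrow>
        distr M (count_space UNIV \<Otimes>\<^sub>M PiM {1..k} (\<lambda>_. borel))
             (\<lambda>\<omega>. (N \<omega>, \<lambda>i\<in>{1..k}. X (\<pi> i) \<omega>))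
      = distr M (count_space UNIV \<Otimes>\<^sub>M PiM {1..k} (\<lambda>_. borel))
             (\<lambda>\<omega>. (N \<omega>, \<lambda>i\<in>{1..k}. X i \<omega>))"
    and N_int: "integrable M (\<lambda>\<omega>. real (N \<omega>))"
    and X_int: "integrable M (X 1)"
  shows "(let DN = distr M borel (\<lambda>\<omega>. real (N \<omega>)); DX = distr M borel (X 1);
             ES = integral\<^sup>L M (\<lambda>\<omega>. \<Sum>j\<in>{1..N \<omega>}. X j \<omega>) in
          ES = (\<Sum>i0\<in>{0::nat,1}. \<Sum>i1\<in>{0::nat,1}.
                  (1 + (-1) ^ (i0 + i1) * \<theta> 1 {0,1}) / 4
                  * (if i0 = 0 then mu_min DN else mu_max DN)
                  * (if i1 = 0 then mu_min DX else mu_max DX))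
        \<and> ES = integral\<^sup>L M (\<lambda>\<omega>. real (N \<omega>)) * integral\<^sup>L M (X 1)
              + \<theta> 1 {0,1} / 4 * (mu_max DN - mu_min DN) * (mu_max DX - mu_min DX))"
proof -
  interpret prob_space M by (rule prob)
  have X1[measurable]: "X 1 \<in> borel_measurable M" using X_meas by simp
  have nonneg: "\<And>j \<omega>. 1 \<le> j \<Longrightarrow> \<omega> \<in> space M \<Longrightarrow> 0 \<le> X j \<omega>"
    using X_pos by (simp add: less_imp_le)
  have cdf: "prob {\<omega>\<in>space M. real (N \<omega>) \<le> t \<and> X 1 \<omega> \<le> y}
      = fgm_copula 1 (\<theta> 1) (\<lambda>m. if m = 0 then prob {\<omega>\<in>space M. real (N \<omega>) \<le> t}
                                 else prob {\<omega>\<in>space M. X 1 \<omega> \<le> y})"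
    if "\<exists>m. 1 \<le> m \<and> 0 < prob {\<omega>\<in>space M. N \<omega> = m}" for t y
    using FGM[OF order.refl that, THEN conjunct2, rule_format, of t "\<lambda>_. y"] by simp
  note tail = measure_joint_tail_fgm[OF prob N_meas X1 cdf]
  have ES: "integral\<^sup>L M (\<lambda>\<omega>. \<Sum>j\<in>{1..N \<omega>}. X j \<omega>)
      = integral\<^sup>L M (\<lambda>\<omega>. real (N \<omega>)) * integral\<^sup>L M (X 1)
        + \<theta> 1 {0, 1} * (mu_max (distr M borel (\<lambda>\<omega>. real (N \<omega>))) - integral\<^sup>L M (\<lambda>\<omega>. real (N \<omega>)))
            * (mu_max (distr M borel (X 1)) - integral\<^sup>L M (X 1))"
    using nonneg X_int
    by (intro integral_random_sum_exchangeable[OF prob N_meas X_meas nonneg exch X_int]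
        sums_integral_if_fgm[OF prob N_meas N_int X_int _ tail]) auto
  have min_N: "mu_min (distr M borel (\<lambda>\<omega>. real (N \<omega>)))
      = 2 * integral\<^sup>L M (\<lambda>\<omega>. real (N \<omega>)) - mu_max (distr M borel (\<lambda>\<omega>. real (N \<omega>)))"
    using mu_min_add_mu_max[OF prob N_int] by linarith
  have min_X: "mu_min (distr M borel (X 1)) = 2 * integral\<^sup>L M (X 1) - mu_max (distr M borel (X 1))"
    using mu_min_add_mu_max[OF prob X_int] by linarith
  show ?thesis
    unfolding Let_def ES min_N min_X by (simp add: field_simps)
qed

end
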